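(* Let $\lambda$ be a nonzero real number. For any integer $p\ge2$, \[ \sum_{k=1}^{\infty}\frac{(-1)^{k-1}\lambda^{k-1}(1)_{k,1/\lambda}}{(k-1)!\,k^{p}(k+1)}=\sum_{k=1}^{p-1}(-1)^{k-1}\zeta_{\lambda}(p-k+1)+\frac{(-1)^{p-1}}{\lambda+1}. \]
   Context: For real $x$ and $\mu\neq 0$, set $(x)_{0,\mu}=1$ and $(x)_{n,\mu}=x(x-\mu)\cdots(x-(n-1)\mu)$ for $n\ge1$; thus $(1)_{k,1/\lambda}=1\cdot(1-\tfrac1\lambda)\cdots(1-\tfrac{k-1}{\lambda})$. The degenerate zeta function is $\zeta_{\lambda}(s)=\sum_{n=1}^{\infty}\frac{(-1)^{n-1}\lambda^{n-1}(1)_{n,1/\lambda}}{(n-1)!\,n^{s}}$ for $\mathrm{Re}(s)>1$. *)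

theory Defs
  imports Complex_Main
begin

definition dfall :: "real \<Rightarrow> nat \<Rightarrow> real \<Rightarrow> real" where
  "dfall x n mu = (\<Prod>i<n. x - real i * mu)"

definition dzeta_term :: "real \<Rightarrow> real \<Rightarrow> nat \<Rightarrow> real" where
  "dzeta_term lam s n =
     (-1) ^ (n - 1) * lam ^ (n - 1) * dfall 1 n (1 / lam) / (fact (n - 1) * real n powr s)"

definition dzeta :: "real \<Rightarrow> real \<Rightarrow> real" where
  "dzeta lam s = (\<Sum>n. dzeta_term lam s (Suc n))"

end

theory Submission
  imports Defs "HOL-Analysis.Analysis" "HOL-Real_Asymp.Real_Asymp"
begin

text \<open>
  Put A k = (-1)^k lam^k (1)_{k+1,1/lam} / k!, which is the rising factorial (1 - lam)^(k) / k!;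
  the k-th summand on the left is A k / ((k+1)^p (k+2)). The partial fraction expansion of
  1 / (m^p (m+1)) splits it into the summands of zeta_lam(p), ..., zeta_lam(2) with alternating
  signs, plus (-1)^(p-1) A k / ((k+1)(k+2)). The last series telescopes: with E k = A k / (k+1)
  we have A k / ((k+1)(k+2)) = (E k - E (k+1)) / (lam + 1), and E k ~ k^(-lam-1) / Gamma(1 - lam)
  tends to 0, so it sums to 1 / (lam + 1). This needs lam > -1, which the convergence of
  zeta_lam(2) forces: for lam \<le> -1 we have A k \<ge> k + 1, and that series would dominate the
  harmonic series.\<close>

lemma dfall_one_scaled_eq_pochhammer:
  assumes "lam \<noteq> 0"
  shows "(-1) ^ k * lam ^ k * dfall 1 (Suc k) (1 / lam) = pochhammer (1 - lam) k"
proof (induction k)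
  case (Suc k)
  have "(-1) ^ Suc k * lam ^ Suc k * dfall 1 (Suc (Suc k)) (1 / lam)
      = ((-1) ^ k * lam ^ k * dfall 1 (Suc k) (1 / lam)) * (- lam * (1 - (real k + 1) / lam))"
    by (simp add: dfall_def ac_simps)
  also have "\<dots> = pochhammer (1 - lam) k * (1 - lam + real k)"
    using Suc.IH assms by (simp add: field_simps)
  finally show ?case
    by (simp add: pochhammer_Suc)
qed (simp add: dfall_def)

lemma dzeta_term_Suc_eq_pochhammer:
  assumes "lam \<noteq> 0"
  shows "dzeta_term lam (real s) (Suc k) = pochhammer (1 - lam) k / (fact k * (real k + 1) ^ s)"
  using dfall_one_scaled_eq_pochhammer[OF assms, of k]
  by (simp add: dzeta_term_def powr_realpow add.commute)

lemma pochhammer_div_fact_ge: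
  fixes a :: real
  assumes "2 \<le> a"
  shows "real n + 1 \<le> pochhammer a n / fact n"
proof (induction n)
  case (Suc n)
  have "real (Suc n) + 1 = (real n + 1) * ((real n + 2) / (real n + 1))"
    by (simp add: field_simps)
  also have "\<dots> \<le> pochhammer a n / fact n * ((a + real n) / (real n + 1))"
    using Suc.IH assms by (intro mult_mono divide_right_mono) auto
  also have "\<dots> = pochhammer a (Suc n) / fact (Suc n)"
    by (simp add: pochhammer_Suc field_simps)
  finally show ?case .
qed simp

lemma summable_dzeta_2_imp_gt_minus_one:
  assumes "lam \<noteq> 0" and "summable (\<lambda>n. dzeta_term lam 2 (Suc n))"
  shows "lam > -1"
proof (rule ccontr)
  assume "\<not> lam > -1"
  have "inverse (real (Suc n)) \<le> dzeta_term lam 2 (Suc n)" for n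
  proof -
    have "inverse (real (Suc n)) = (real n + 1) / (real n + 1) ^ 2"
      by (simp add: power2_eq_square divide_simps)
    also have "\<dots> \<le> pochhammer (1 - lam) n / fact n / (real n + 1) ^ 2"
      using pochhammer_div_fact_ge[of "1 - lam" n] \<open>\<not> lam > -1\<close>
      by (intro divide_right_mono) auto
    also have "\<dots> = dzeta_term lam 2 (Suc n)"
      using dzeta_term_Suc_eq_pochhammer[OF assms(1), of 2 n] by simp
    finally show ?thesis .
  qed
  then have "summable (\<lambda>n. inverse (real (Suc n)))"
    by (intro summable_comparison_test'[OF assms(2)]) simp
  then show False
    using not_summable_harmonic summable_Suc_iff by blast
qed

lemma tendsto_pochhammer_div_fact_Suc:
  fixes z :: real
  assumes "z < 2"
  shows "(\<lambda>n. pochhammer z n / fact (Suc n)) \<longlonglongrightarrow> 0"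
proof -
  have "(\<lambda>n. rGamma_series z n * (exp (z * ln (real n)) / ((z + real n) * (real n + 1))))
          \<longlonglongrightarrow> rGamma z * 0"
    using assms by (intro tendsto_mult rGamma_series_LIMSEQ) real_asymp
  moreover have "eventually (\<lambda>n. rGamma_series z n
      * (exp (z * ln (real n)) / ((z + real n) * (real n + 1))) = pochhammer z n / fact (Suc n))
      sequentially"
    using eventually_gt_at_top[of "nat \<lceil>- z\<rceil>"]
  proof eventually_elim
    case (elim n)
    then have "z + real n \<noteq> 0" by linarith
    then show ?case
      by (simp add: rGamma_series_def pochhammer_Suc)
  qed
  ultimately show ?thesis
    by (simp add: tendsto_cong)
qed

lemma pochhammer_div_fact_telescoping_sums:
  fixes z :: real
  assumes "z < 2"
  shows "(\<lambda>k. pochhammer z k / (fact k * ((real k + 1) * (real k + 2)))) sums (1 / (2 - z))"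
proof -
  define E where "E n = pochhammer z n / fact (Suc n)" for n
  have "(\<lambda>k. (E k - E (Suc k)) / (2 - z)) sums ((E 0 - 0) / (2 - z))"
    unfolding E_def
    by (intro sums_divide telescope_sums' tendsto_pochhammer_div_fact_Suc assms)
  moreover have "(E k - E (Suc k)) / (2 - z)
      = pochhammer z k / (fact k * ((real k + 1) * (real k + 2)))" for k
    using assms by (simp add: E_def pochhammer_Suc divide_simps) (simp add: algebra_simps)
  ultimately show ?thesis
    by (simp add: E_def)
qed

lemma partial_fractions_power_mult_plus_one:
  fixes m :: "'a :: field"
  assumes "p \<ge> 1" and "m \<noteq> 0" and "m + 1 \<noteq> 0"
  shows "1 / (m ^ p * (m + 1))
    = (\<Sum>k=1..p-1. (-1) ^ (k - 1) / m ^ (p - k + 1)) + (-1) ^ (p - 1) / (m * (m + 1))"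
  using assms(1)
proof (induction p rule: nat_induct_at_least)
  case (Suc p)
  have split: "c / (m * (m + 1)) / m = c / m ^ 2 - c / (m * (m + 1))" for c :: 'a
    using assms(2,3) by (simp add: divide_simps power2_eq_square) (simp add: algebra_simps)
  have "1 / (m ^ Suc p * (m + 1)) = 1 / (m ^ p * (m + 1)) / m"
    by simp
  also have "\<dots> = (\<Sum>k=1..p-1. (-1) ^ (k - 1) / m ^ (p - k + 1) / m)
      + ((-1) ^ (p - 1) / m ^ 2 - (-1) ^ (p - 1) / (m * (m + 1)))"
    unfolding Suc.IH add_divide_distrib sum_divide_distrib split ..
  also have "(\<Sum>k=1..p-1. (-1) ^ (k - 1) / m ^ (p - k + 1) / m)
      = (\<Sum>k=1..p-1. (-1) ^ (k - 1) / m ^ (Suc p - k + 1))"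
    by (intro sum.cong) (auto simp: Suc_diff_le)
  also have "\<dots> + ((-1) ^ (p - 1) / m ^ 2 - (-1) ^ (p - 1) / (m * (m + 1)))
      = (\<Sum>k=1..Suc p-1. (-1) ^ (k - 1) / m ^ (Suc p - k + 1))
        + (-1) ^ (Suc p - 1) / (m * (m + 1))"
    using Suc.hyps by (cases p) (simp_all add: power2_eq_square)
  finally show ?case .
qed simp

lemma dfall_series_term_partial_fractions:
  assumes "lam \<noteq> 0" and "p \<ge> 1"
  shows "(-1) ^ k * lam ^ k * dfall 1 (Suc k) (1 / lam)
        / (fact k * real (Suc k) ^ p * real (Suc k + 1))
      = (\<Sum>j=1..p-1. (-1) ^ (j - 1) * dzeta_term lam (real (p - j + 1)) (Suc k))
        + (-1) ^ (p - 1) * (pochhammer (1 - lam) k / (fact k * ((real k + 1) * (real k + 2))))"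
proof -
  let ?A = "pochhammer (1 - lam) k / fact k" and ?m = "real k + 1"
  have "(-1) ^ k * lam ^ k * dfall 1 (Suc k) (1 / lam)
      / (fact k * real (Suc k) ^ p * real (Suc k + 1)) = ?A * (1 / (?m ^ p * (?m + 1)))"
    by (simp add: dfall_one_scaled_eq_pochhammer assms(1) add.commute)
  also have "\<dots> = ?A * ((\<Sum>j=1..p-1. (-1) ^ (j - 1) / ?m ^ (p - j + 1))
      + (-1) ^ (p - 1) / (?m * (?m + 1)))"
    using assms(2) by (subst partial_fractions_power_mult_plus_one) auto
  also have "\<dots> = (\<Sum>j=1..p-1. (-1) ^ (j - 1) * dzeta_term lam (real (p - j + 1)) (Suc k))
      + (-1) ^ (p - 1) * (pochhammer (1 - lam) k / (fact k * ((real k + 1) * (real k + 2))))"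
    unfolding dzeta_term_Suc_eq_pochhammer[OF assms(1)] sum_distrib_left distrib_left
    by (simp add: algebra_simps)
  finally show ?thesis .
qed

theorem theorem3:
  fixes lam :: real and p :: nat
  assumes "lam \<noteq> 0" and "p \<ge> 2"
    and "\<And>s::nat. 2 \<le> s \<Longrightarrow> s \<le> p \<Longrightarrow> summable (\<lambda>n. dzeta_term lam (real s) (Suc n))"
  shows "(\<Sum>k. (-1) ^ k * lam ^ k * dfall 1 (Suc k) (1 / lam)
              / (fact k * real (Suc k) ^ p * real (Suc k + 1)))
         = (\<Sum>k=1..p-1. (-1) ^ (k - 1) * dzeta lam (real (p - k + 1)))
           + (-1) ^ (p - 1) / (lam + 1)"
proof -
  have "lam > -1"
    using summable_dzeta_2_imp_gt_minus_one[OF assms(1)] assms(2) assms(3)[of 2] by simp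
  define B where "B k = pochhammer (1 - lam) k / (fact k * ((real k + 1) * (real k + 2)))" for k
  have summand: "(-1) ^ k * lam ^ k * dfall 1 (Suc k) (1 / lam)
        / (fact k * real (Suc k) ^ p * real (Suc k + 1))
      = (\<Sum>j=1..p-1. (-1) ^ (j - 1) * dzeta_term lam (real (p - j + 1)) (Suc k))
        + (-1) ^ (p - 1) * B k" for k
    using dfall_series_term_partial_fractions[OF assms(1), of p k] assms(2) by (simp add: B_def)
  have "(\<lambda>k. \<Sum>j=1..p-1. (-1) ^ (j - 1) * dzeta_term lam (real (p - j + 1)) (Suc k))
      sums (\<Sum>j=1..p-1. (-1) ^ (j - 1) * dzeta lam (real (p - j + 1)))"
    unfolding dzeta_def using assms(2) by (intro sums_sum sums_mult summable_sums assms(3)) auto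
  moreover have "(\<lambda>k. (-1) ^ (p - 1) * B k) sums ((-1) ^ (p - 1) / (lam + 1))"
    using sums_mult[OF pochhammer_div_fact_telescoping_sums[of "1 - lam"], of "(-1) ^ (p - 1)"]
      \<open>lam > -1\<close>
    unfolding B_def by (simp add: add.commute)
  ultimately show ?thesis
    unfolding summand by (rule sums_unique[OF sums_add, symmetric])
qed

end
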